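(* Let $\mathbb{T}$ be a time scale, $\alpha<\beta$ points of $\mathbb{T}$, and let $\varphi,\psi:[\alpha,\beta]_{\mathbb{T}}\to\mathbb{R}$ be nabla differentiable with $\psi^{\nabla}(x)\neq 0$ for $x\in(\alpha,\beta]_{\mathbb{T}}$. Define $$\mathcal{Y}_{\varphi,\psi}(x)=\frac{\varphi^{\nabla}(x)}{\psi^{\nabla}(x)}\psi(x)-\varphi(x),\qquad x\in(\alpha,\beta]_{\mathbb{T}}.$$ Suppose that $\varphi^{\nabla}/\psi^{\nabla}$ is nabla differentiable. Then: (1) If $\psi^{\rho}\ge 0$ and $\varphi^{\nabla}/\psi^{\nabla}$ is increasing (resp. decreasing), then $\mathcal{Y}_{\varphi,\psi}$ is increasing (resp. decreasing). (2) If $\psi^{\rho}\le 0$ and $\varphi^{\nabla}/\psi^{\nabla}$ is increasing (resp. decreasing), then $\mathcal{Y}_{\varphi,\psi}$ is decreasing (resp. increasing).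
   Context: $\mathbb{T}$ is a time scale (nonempty closed subset of $\mathbb{R}$), $[\alpha,\beta]_{\mathbb{T}}=[\alpha,\beta]\cap\mathbb{T}$. $\rho(t)=\sup\{s\in\mathbb{T}:s<t\}$ is the backward jump operator, $f^{\rho}=f\circ\rho$, and $f^{\nabla}$ is the nabla derivative. "Increasing"/"decreasing" are meant in the non-strict sense (nondecreasing/nonincreasing). *)

theory Defs
  imports "HOL-Analysis.Analysis"
begin

definition time_scale :: "real set \<Rightarrow> bool" where
  "time_scale T \<longleftrightarrow> T \<noteq> {} \<and> closed T"

text \<open>Backward jump operator; convention: rho(min T) = min T.\<close>
definition backward_jump :: "real set \<Rightarrow> real \<Rightarrow> real" where
  "backward_jump T t = (if \<exists>s\<in>T. s < t then Sup {s\<in>T. s < t} else t)"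

definition has_nabla_derivative :: "real set \<Rightarrow> (real \<Rightarrow> real) \<Rightarrow> real \<Rightarrow> real \<Rightarrow> bool" where
  "has_nabla_derivative T f D t \<longleftrightarrow>
     (\<forall>\<epsilon>>0. \<exists>\<delta>>0. \<forall>s\<in>T. \<bar>t - s\<bar> < \<delta> \<longrightarrow>
        \<bar>f (backward_jump T t) - f s - D * (backward_jump T t - s)\<bar>
          \<le> \<epsilon> * \<bar>backward_jump T t - s\<bar>)"

end

theory Submission
  imports Defs
begin

text \<open>Write \<open>R = \<phi>\<^sup>\<nabla> / \<psi>\<^sup>\<nabla>\<close>. By the nabla product rule and \<open>R \<psi>\<^sup>\<nabla> = \<phi>\<^sup>\<nabla>\<close>,
  \<open>\<Y>\<^sup>\<nabla> = (R \<psi> - \<phi>)\<^sup>\<nabla> = R\<^sup>\<nabla> \<psi>\<^sup>\<rho>\<close>, so everything reduces to two facts: a monotone function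
  has a nabla derivative of the matching sign, and a function with nonnegative nabla derivative
  is increasing. The second is proved by backward induction along the closed set, with separate
  arguments at left-scattered, left-dense and right-dense points. Since monotonicity of \<open>R\<close> is
  only assumed on \<open>(\<alpha>, \<beta>]\<close>, the sign of \<open>R\<^sup>\<nabla>\<close> is only known at points with another point
  of \<open>(\<alpha>, \<beta>]\<close> to their left; comparing two points of \<open>(\<alpha>, \<beta>]\<close> never needs more.\<close>

lemma backward_jump_le: "backward_jump S x \<le> x"
  unfolding backward_jump_def by (auto intro: cSup_least)

lemma le_backward_jump:
  assumes "s \<in> S" "s < x"
  shows "s \<le> backward_jump S x"
  using assms unfolding backward_jump_def
  by (auto intro!: cSup_upper bdd_aboveI[of _ x])

lemma backward_jump_least:
  assumes "s \<in> S" "s < x" "\<And>t. t \<in> S \<Longrightarrow> t < x \<Longrightarrow> t \<le> z"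
  shows "backward_jump S x \<le> z"
  using assms unfolding backward_jump_def by (auto intro: cSup_least)

lemma backward_jump_mem:
  assumes "closed S" "s \<in> S" "s < x"
  shows "backward_jump S x \<in> S"
proof -
  have "Sup {t \<in> S. t < x} \<in> closure {t \<in> S. t < x}"
    using assms by (intro closure_contains_Sup bdd_aboveI[of _ x]) auto
  also have "\<dots> \<subseteq> S"
    using assms(1) by (simp add: closure_minimal)
  finally show ?thesis
    using assms unfolding backward_jump_def by auto
qed

lemma exists_between_backward_jump:
  assumes "s \<in> S" "s < x" "z < backward_jump S x"
  shows "\<exists>t\<in>S. z < t \<and> t < x"
proof -
  have "z < Sup {t \<in> S. t < x}"
    using assms unfolding backward_jump_def by (auto split: if_splits)
  then show ?thesis
    using assms by (subst (asm) less_cSup_iff) (auto intro: bdd_aboveI[of _ x])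
qed

lemma backward_jump_Int_atLeastAtMost:
  assumes "\<alpha> \<in> T" "\<alpha> < x" "x \<le> \<beta>"
  shows "backward_jump (T \<inter> {\<alpha>..\<beta>}) x = backward_jump T x"
proof (rule antisym)
  show "backward_jump (T \<inter> {\<alpha>..\<beta>}) x \<le> backward_jump T x"
    using assms by (intro backward_jump_least[of \<alpha>]) (auto intro: le_backward_jump)
  have "\<alpha> \<le> backward_jump (T \<inter> {\<alpha>..\<beta>}) x"
    using assms by (intro le_backward_jump) auto
  moreover have "t \<le> backward_jump (T \<inter> {\<alpha>..\<beta>}) x" if "t \<in> T" "\<alpha> \<le> t" "t < x" for t
    using that assms by (intro le_backward_jump) auto
  ultimately show "backward_jump T x \<le> backward_jump (T \<inter> {\<alpha>..\<beta>}) x"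
    using assms by (intro backward_jump_least[of \<alpha>]) (auto, meson le_cases order.trans)
qed

lemma nabla_derivative_backward_difference:
  assumes "has_nabla_derivative S f D x" "x \<in> S"
  shows "f x - f (backward_jump S x) = D * (x - backward_jump S x)"
proof -
  let ?r = "backward_jump S x"
  let ?K = "\<bar>?r - x\<bar>"
  have "\<bar>f ?r - f x - D * (?r - x)\<bar> \<le> 0 + e" if "e > 0" for e
  proof -
    have "e / (?K + 1) > 0" using that by simp
    then have "\<bar>f ?r - f x - D * (?r - x)\<bar> \<le> e / (?K + 1) * ?K"
      using assms unfolding has_nabla_derivative_def by fastforce
    also have "\<dots> \<le> e"
      using that by (simp add: field_simps)
    finally show ?thesis by simp
  qed
  then have "\<bar>f ?r - f x - D * (?r - x)\<bar> \<le> 0"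
    by (rule field_le_epsilon)
  then show ?thesis by (simp add: algebra_simps)
qed

lemma has_nabla_derivative_continuous:
  assumes "has_nabla_derivative S f D x" "x \<in> S"
  shows "continuous (at x within S) f"
  unfolding continuous_within_eps_delta
proof (intro allI impI)
  fix e :: real assume "e > 0"
  let ?r = "backward_jump S x"
  define K where "K = \<bar>?r - x\<bar> + 1"
  define \<epsilon> where "\<epsilon> = e / (2 * K)"
  have "K > 0" by (simp add: K_def add_nonneg_pos)
  then have "\<epsilon> > 0" and \<epsilon>: "\<epsilon> * K = e / 2"
    using \<open>e > 0\<close> by (simp_all add: \<epsilon>_def)
  then obtain d0 where "d0 > 0" and d0: "\<forall>s\<in>S. \<bar>x - s\<bar> < d0 \<longrightarrow>
      \<bar>f ?r - f s - D * (?r - s)\<bar> \<le> \<epsilon> * \<bar>?r - s\<bar>"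
    using assms(1) unfolding has_nabla_derivative_def by blast
  define d where "d = min d0 (min 1 (e / (2 * (\<bar>D\<bar> + 1))))"
  have "d > 0" using \<open>d0 > 0\<close> \<open>e > 0\<close> by (simp add: d_def)
  moreover have "\<bar>f s - f x\<bar> < e" if "s \<in> S" "\<bar>x - s\<bar> < d" for s
  proof -
    let ?E = "f ?r - f s - D * (?r - s)"
    have "\<bar>?E\<bar> \<le> \<epsilon> * K"
      using that d0 \<open>\<epsilon> > 0\<close> by (intro order.trans[OF d0[rule_format]] mult_left_mono)
        (auto simp: d_def K_def)
    have "\<bar>D * (s - x)\<bar> \<le> \<bar>D\<bar> * (e / (2 * (\<bar>D\<bar> + 1)))"
      unfolding abs_mult using that by (intro mult_left_mono) (auto simp: d_def abs_minus_commute)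
    also have "\<dots> < e / 2"
      using \<open>e > 0\<close> by (simp add: field_simps)
    finally have "\<bar>D * (s - x)\<bar> < e / 2" .
    moreover have "f s - f x = D * (s - x) - ?E"
      using nabla_derivative_backward_difference[OF assms] by (simp add: algebra_simps)
    ultimately show ?thesis
      using \<open>\<bar>?E\<bar> \<le> \<epsilon> * K\<close> \<epsilon> abs_triangle_ineq4[of "D * (s - x)" ?E] by linarith
  qed
  ultimately show "\<exists>d>0. \<forall>s\<in>S. dist s x < d \<longrightarrow> dist (f s) (f x) < e"
    by (auto simp: dist_real_def abs_minus_commute)
qed

lemma has_nabla_derivative_minus:
  assumes "has_nabla_derivative S f D x"
  shows "has_nabla_derivative S (\<lambda>t. - f t) (- D) x"
proof -
  have "\<bar>- a - - b - - D * c\<bar> = \<bar>a - b - D * c\<bar>" for a b c :: real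
    by (simp add: abs_minus_commute algebra_simps)
  then show ?thesis
    using assms unfolding has_nabla_derivative_def by presburger
qed

lemma has_nabla_derivative_diff:
  assumes "has_nabla_derivative S f Df x" "has_nabla_derivative S g Dg x"
  shows "has_nabla_derivative S (\<lambda>t. f t - g t) (Df - Dg) x"
  unfolding has_nabla_derivative_def
proof (intro allI impI)
  fix e :: real assume "e > 0"
  let ?r = "backward_jump S x"
  obtain d1 where "d1 > 0" and d1: "\<forall>s\<in>S. \<bar>x - s\<bar> < d1 \<longrightarrow>
      \<bar>f ?r - f s - Df * (?r - s)\<bar> \<le> e / 2 * \<bar>?r - s\<bar>"
    using assms(1) \<open>e > 0\<close> unfolding has_nabla_derivative_def by (meson half_gt_zero)
  obtain d2 where "d2 > 0" and d2: "\<forall>s\<in>S. \<bar>x - s\<bar> < d2 \<longrightarrow>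
      \<bar>g ?r - g s - Dg * (?r - s)\<bar> \<le> e / 2 * \<bar>?r - s\<bar>"
    using assms(2) \<open>e > 0\<close> unfolding has_nabla_derivative_def by (meson half_gt_zero)
  have "\<bar>f ?r - g ?r - (f s - g s) - (Df - Dg) * (?r - s)\<bar> \<le> e * \<bar>?r - s\<bar>"
    if "s \<in> S" "\<bar>x - s\<bar> < min d1 d2" for s
  proof -
    have "f ?r - g ?r - (f s - g s) - (Df - Dg) * (?r - s)
          = (f ?r - f s - Df * (?r - s)) - (g ?r - g s - Dg * (?r - s))"
      by (simp add: algebra_simps)
    also have "\<bar>\<dots>\<bar> \<le> e / 2 * \<bar>?r - s\<bar> + e / 2 * \<bar>?r - s\<bar>"
      by (rule order.trans[OF abs_triangle_ineq4 add_mono]) (use d1 d2 that in auto)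
    finally show ?thesis by simp
  qed
  then show "\<exists>d>0. \<forall>s\<in>S. \<bar>x - s\<bar> < d \<longrightarrow>
      \<bar>f ?r - g ?r - (f s - g s) - (Df - Dg) * (?r - s)\<bar> \<le> e * \<bar>?r - s\<bar>"
    using \<open>d1 > 0\<close> \<open>d2 > 0\<close> by (intro exI[of _ "min d1 d2"]) auto
qed

lemma product_increment_estimate:
  fixes a0 a1 a2 b1 b2 Da Db h :: real
  shows "\<bar>a1 * b1 - a2 * b2 - (Da * b1 + a0 * Db) * h\<bar>
    \<le> \<bar>b1\<bar> * \<bar>a1 - a2 - Da * h\<bar> + \<bar>a2\<bar> * \<bar>b1 - b2 - Db * h\<bar> + \<bar>a2 - a0\<bar> * \<bar>Db\<bar> * \<bar>h\<bar>"
proof -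
  have "a1 * b1 - a2 * b2 - (Da * b1 + a0 * Db) * h
        = b1 * (a1 - a2 - Da * h) + a2 * (b1 - b2 - Db * h) + (a2 - a0) * Db * h"
    by (simp add: algebra_simps)
  also have "\<bar>\<dots>\<bar> \<le> \<bar>b1 * (a1 - a2 - Da * h)\<bar> + \<bar>a2 * (b1 - b2 - Db * h)\<bar> + \<bar>(a2 - a0) * Db * h\<bar>"
    by (rule order.trans[OF abs_triangle_ineq add_right_mono[OF abs_triangle_ineq]])
  finally show ?thesis
    by (simp add: abs_mult)
qed

lemma has_nabla_derivative_mult:
  assumes f: "has_nabla_derivative S f Df x" and g: "has_nabla_derivative S g Dg x"
    and "x \<in> S"
  shows "has_nabla_derivative S (\<lambda>t. f t * g t) (Df * g (backward_jump S x) + f x * Dg) x"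
  unfolding has_nabla_derivative_def
proof (intro allI impI)
  fix e :: real assume "e > 0"
  let ?r = "backward_jump S x"
  define C where "C = \<bar>g ?r\<bar> + \<bar>f x\<bar> + 1 + \<bar>Dg\<bar>"
  define \<epsilon> where "\<epsilon> = e / C"
  have "C > 0" by (simp add: C_def add_nonneg_pos)
  then have "\<epsilon> > 0" and "C * \<epsilon> = e" using \<open>e > 0\<close> by (simp_all add: \<epsilon>_def)
  then obtain d1 where "d1 > 0" and d1: "\<forall>s\<in>S. \<bar>x - s\<bar> < d1 \<longrightarrow>
      \<bar>f ?r - f s - Df * (?r - s)\<bar> \<le> \<epsilon> * \<bar>?r - s\<bar>"
    using f unfolding has_nabla_derivative_def by blast
  obtain d2 where "d2 > 0" and d2: "\<forall>s\<in>S. \<bar>x - s\<bar> < d2 \<longrightarrow>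
      \<bar>g ?r - g s - Dg * (?r - s)\<bar> \<le> \<epsilon> * \<bar>?r - s\<bar>"
    using g \<open>\<epsilon> > 0\<close> unfolding has_nabla_derivative_def by blast
  have "min 1 \<epsilon> > 0" using \<open>\<epsilon> > 0\<close> by simp
  then obtain d3 where "d3 > 0" and d3: "\<forall>s\<in>S. dist s x < d3 \<longrightarrow> \<bar>f s - f x\<bar> < min 1 \<epsilon>"
    using has_nabla_derivative_continuous[OF f \<open>x \<in> S\<close>]
    unfolding continuous_within_eps_delta dist_real_def by blast
  have "\<bar>f ?r * g ?r - f s * g s - (Df * g ?r + f x * Dg) * (?r - s)\<bar> \<le> e * \<bar>?r - s\<bar>"
    if "s \<in> S" "\<bar>x - s\<bar> < min d1 (min d2 d3)" for s
  proof -
    have fs: "\<bar>f s - f x\<bar> \<le> \<epsilon>" "\<bar>f s\<bar> \<le> \<bar>f x\<bar> + 1"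
      using that d3 by (auto simp: dist_real_def abs_minus_commute)
    have "\<bar>f ?r * g ?r - f s * g s - (Df * g ?r + f x * Dg) * (?r - s)\<bar>
        \<le> \<bar>g ?r\<bar> * \<bar>f ?r - f s - Df * (?r - s)\<bar> + \<bar>f s\<bar> * \<bar>g ?r - g s - Dg * (?r - s)\<bar>
          + \<bar>f s - f x\<bar> * \<bar>Dg\<bar> * \<bar>?r - s\<bar>"
      by (rule product_increment_estimate)
    also have "\<dots> \<le> \<bar>g ?r\<bar> * (\<epsilon> * \<bar>?r - s\<bar>) + (\<bar>f x\<bar> + 1) * (\<epsilon> * \<bar>?r - s\<bar>)
                     + \<epsilon> * \<bar>Dg\<bar> * \<bar>?r - s\<bar>"
      using that d1 d2 fs by (intro add_mono mult_mono mult_right_mono) auto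
    also have "\<dots> = C * \<epsilon> * \<bar>?r - s\<bar>"
      by (simp add: C_def algebra_simps)
    finally show ?thesis
      using \<open>C * \<epsilon> = e\<close> by simp
  qed
  then show "\<exists>d>0. \<forall>s\<in>S. \<bar>x - s\<bar> < d \<longrightarrow>
      \<bar>f ?r * g ?r - f s * g s - (Df * g ?r + f x * Dg) * (?r - s)\<bar> \<le> e * \<bar>?r - s\<bar>"
    using \<open>d1 > 0\<close> \<open>d2 > 0\<close> \<open>d3 > 0\<close> by (intro exI[of _ "min d1 (min d2 d3)"]) auto
qed

lemma backward_induction_step:
  fixes S :: "real set"
  assumes "closed S" "a \<in> S" "c \<in> S" "a < c"
    and left_scattered: "backward_jump S c < c \<Longrightarrow> P (backward_jump S c)"
    and left_dense: "backward_jump S c = c \<Longrightarrow> \<exists>d>0. \<forall>s\<in>S. c - d < s \<longrightarrow> s < c \<longrightarrow> P s"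
  shows "\<exists>t\<in>S. a \<le> t \<and> t < c \<and> (\<forall>u\<in>S. t \<le> u \<longrightarrow> u < c \<longrightarrow> P u)"
proof -
  let ?r = "backward_jump S c"
  have "?r \<in> S" "a \<le> ?r"
    using assms by (auto intro: backward_jump_mem le_backward_jump)
  consider "?r < c" | "?r = c"
    using backward_jump_le[of S c] by linarith
  then show ?thesis
  proof cases
    case 1
    have "u = ?r" if "u \<in> S" "?r \<le> u" "u < c" for u
      using that le_backward_jump[of u S c] by linarith
    then show ?thesis
      using 1 left_scattered \<open>?r \<in> S\<close> \<open>a \<le> ?r\<close> by blast
  next
    case 2
    obtain d where "d > 0" and d: "\<forall>s\<in>S. c - d < s \<longrightarrow> s < c \<longrightarrow> P s"
      using left_dense 2 by blast
    obtain t where "t \<in> S" "max a (c - d) < t" "t < c"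
      using exists_between_backward_jump[OF \<open>a \<in> S\<close> \<open>a < c\<close>, of "max a (c - d)"]
        2 \<open>a < c\<close> \<open>d > 0\<close> by auto
    then show ?thesis
      using d by (intro bexI[of _ t]) auto
  qed
qed

lemma backward_induction_Inf_mem:
  fixes S :: "real set"
  assumes "closed S" "a \<in> S" "b \<in> S" "a \<le> b" "P b"
    and right_dense: "\<And>x. x \<in> S \<Longrightarrow> a \<le> x \<Longrightarrow> x < b \<Longrightarrow> (\<forall>z>x. \<exists>s\<in>S. x < s \<and> s < z)
      \<Longrightarrow> (\<forall>s\<in>S. x < s \<longrightarrow> s \<le> b \<longrightarrow> P s) \<Longrightarrow> P x"
  defines "B \<equiv> {t \<in> S. a \<le> t \<and> (\<forall>u\<in>S. t \<le> u \<longrightarrow> u \<le> b \<longrightarrow> P u)}"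
  shows "Inf B \<in> B"
proof -
  let ?c = "Inf B"
  have "b \<in> B" "bdd_below B"
    using assms by (auto simp: B_def intro: bdd_belowI[of _ a])
  then have c_le: "?c \<le> t" if "t \<in> B" for t
    using that by (intro cInf_lower)
  have below_c: "\<exists>t\<in>B. t < z" if "?c < z" for z
    using that \<open>b \<in> B\<close> \<open>bdd_below B\<close> by (subst (asm) cInf_less_iff) auto
  have "a \<le> ?c"
    using \<open>b \<in> B\<close> by (intro cInf_greatest) (auto simp: B_def)
  have "?c \<le> b"
    using c_le \<open>b \<in> B\<close> .
  have "?c \<in> closure B"
    using \<open>b \<in> B\<close> \<open>bdd_below B\<close> by (intro closure_contains_Inf) auto
  also have "closure B \<subseteq> S"
    using \<open>closed S\<close> by (intro closure_minimal) (auto simp: B_def)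
  finally have "?c \<in> S" .
  have P_above: "\<forall>u\<in>S. ?c < u \<longrightarrow> u \<le> b \<longrightarrow> P u"
  proof (intro ballI impI)
    fix u assume "u \<in> S" "?c < u" "u \<le> b"
    then obtain t where "t \<in> B" "t < u"
      using below_c by blast
    then show "P u"
      using \<open>u \<in> S\<close> \<open>u \<le> b\<close> by (auto simp: B_def)
  qed
  have "P ?c"
  proof (cases "?c \<in> B")
    case True
    then show ?thesis using \<open>?c \<in> S\<close> \<open>?c \<le> b\<close> by (auto simp: B_def)
  next
    case False
    have "?c < b"
      using \<open>?c \<le> b\<close> \<open>b \<in> B\<close> False by (metis order_le_less)
    moreover have "\<exists>s\<in>S. ?c < s \<and> s < z" if "?c < z" for z
    proof -
      obtain t where "t \<in> B" "t < z"
        using below_c \<open>?c < z\<close> by blast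
      moreover have "?c < t"
        using c_le[OF \<open>t \<in> B\<close>] False \<open>t \<in> B\<close> by (metis order_le_less)
      ultimately show ?thesis by (auto simp: B_def)
    qed
    ultimately show ?thesis
      using P_above by (intro right_dense[OF \<open>?c \<in> S\<close> \<open>a \<le> ?c\<close>]) auto
  qed
  then have "\<forall>u\<in>S. ?c \<le> u \<longrightarrow> u \<le> b \<longrightarrow> P u"
    using P_above by (metis order_le_less)
  then have "?c \<in> {t \<in> S. a \<le> t \<and> (\<forall>u\<in>S. t \<le> u \<longrightarrow> u \<le> b \<longrightarrow> P u)}"
    using \<open>?c \<in> S\<close> \<open>a \<le> ?c\<close> by blast
  then show ?thesis
    by (simp only: B_def)
qed

lemma closed_backward_induction:
  fixes S :: "real set"
  assumes "closed S" "a \<in> S" "b \<in> S" "a \<le> b" "P b"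
    and left_scattered: "\<And>x. x \<in> S \<Longrightarrow> a < x \<Longrightarrow> x \<le> b \<Longrightarrow> backward_jump S x < x \<Longrightarrow> P x
      \<Longrightarrow> P (backward_jump S x)"
    and left_dense: "\<And>x. x \<in> S \<Longrightarrow> a < x \<Longrightarrow> x \<le> b \<Longrightarrow> backward_jump S x = x \<Longrightarrow> P x
      \<Longrightarrow> \<exists>d>0. \<forall>s\<in>S. x - d < s \<longrightarrow> s < x \<longrightarrow> P s"
    and right_dense: "\<And>x. x \<in> S \<Longrightarrow> a \<le> x \<Longrightarrow> x < b \<Longrightarrow> (\<forall>z>x. \<exists>s\<in>S. x < s \<and> s < z)
      \<Longrightarrow> (\<forall>s\<in>S. x < s \<longrightarrow> s \<le> b \<longrightarrow> P s) \<Longrightarrow> P x"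
  shows "P a"
proof -
  define B where "B = {t \<in> S. a \<le> t \<and> (\<forall>u\<in>S. t \<le> u \<longrightarrow> u \<le> b \<longrightarrow> P u)}"
  define c where "c = Inf B"
  have "b \<in> B" "bdd_below B"
    using assms by (auto simp: B_def intro: bdd_belowI[of _ a])
  then have "c \<le> b"
    unfolding c_def by (rule cInf_lower)
  have "c \<in> B"
    unfolding c_def B_def using assms(1-5) right_dense by (rule backward_induction_Inf_mem)
  then have "c \<in> S" "a \<le> c" "P c"
    using \<open>c \<le> b\<close> by (auto simp: B_def)
  have "\<not> a < c"
  proof
    assume "a < c"
    obtain t where "t \<in> S" "a \<le> t" "t < c" and t: "\<forall>u\<in>S. t \<le> u \<longrightarrow> u < c \<longrightarrow> P u"
      using backward_induction_step[OF \<open>closed S\<close> \<open>a \<in> S\<close> \<open>c \<in> S\<close> \<open>a < c\<close>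
          left_scattered[OF \<open>c \<in> S\<close> \<open>a < c\<close> \<open>c \<le> b\<close> _ \<open>P c\<close>]
          left_dense[OF \<open>c \<in> S\<close> \<open>a < c\<close> \<open>c \<le> b\<close> _ \<open>P c\<close>]]
      by blast
    then have "t \<in> B"
      using \<open>c \<in> B\<close> by (auto simp: B_def not_less)
    then show False
      using cInf_lower[OF _ \<open>bdd_below B\<close>] \<open>t < c\<close> c_def by fastforce
  qed
  then show "P a"
    using \<open>P c\<close> \<open>a \<le> c\<close> by auto
qed

lemma le_at_right_dense_point:
  fixes g :: "real \<Rightarrow> real"
  assumes "continuous (at x within S) g" and dense: "\<forall>z>x. \<exists>s\<in>S. x < s \<and> s < z" and "x < b"
    and bound: "\<forall>s\<in>S. x < s \<longrightarrow> s \<le> b \<longrightarrow> g s \<le> c"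
  shows "g x \<le> c"
proof (rule field_le_epsilon)
  fix \<eta> :: real assume "\<eta> > 0"
  obtain d where "d > 0" and d: "\<forall>s\<in>S. dist s x < d \<longrightarrow> dist (g s) (g x) < \<eta>"
    using assms(1) \<open>\<eta> > 0\<close> unfolding continuous_within_eps_delta by blast
  obtain s where "s \<in> S" "x < s" "s < min b (x + d)"
    using dense \<open>x < b\<close> \<open>d > 0\<close> by (metis less_add_same_cancel1 min_less_iff_conj)
  then show "g x \<le> c + \<eta>"
    using d bound by (force simp: dist_real_def)
qed

text \<open>The slack \<open>e * (b - t)\<close> absorbs the error term of the nabla derivative at left-dense
  points, where only \<open>f s \<le> f x + e * (x - s)\<close> is available.\<close>

lemma nabla_derivative_nonneg_imp_le_slack:
  fixes S :: "real set"
  assumes "closed S" "a \<in> S" "b \<in> S" "a \<le> b" "e > 0"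
    and deriv: "\<forall>x\<in>S \<inter> {a..b}. has_nabla_derivative S f (f' x) x"
    and nonneg: "\<forall>x\<in>S \<inter> {a<..b}. 0 \<le> f' x"
  shows "f a \<le> f b + e * (b - a)"
proof (rule closed_backward_induction[OF assms(1-4)])
  fix x assume x: "x \<in> S" "a < x" "x \<le> b" and "backward_jump S x < x"
    and Px: "f x \<le> f b + e * (b - x)"
  have "f x - f (backward_jump S x) = f' x * (x - backward_jump S x)"
    using deriv x by (intro nabla_derivative_backward_difference) auto
  moreover have "0 \<le> f' x * (x - backward_jump S x)"
    using nonneg x backward_jump_le[of S x] by simp
  moreover have "e * (b - x) \<le> e * (b - backward_jump S x)"
    using \<open>e > 0\<close> backward_jump_le[of S x] by simp
  ultimately show "f (backward_jump S x) \<le> f b + e * (b - backward_jump S x)"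
    using Px by linarith
next
  fix x assume x: "x \<in> S" "a < x" "x \<le> b" and "backward_jump S x = x"
    and Px: "f x \<le> f b + e * (b - x)"
  obtain d where "d > 0" and d: "\<forall>s\<in>S. \<bar>x - s\<bar> < d \<longrightarrow>
      \<bar>f x - f s - f' x * (x - s)\<bar> \<le> e * \<bar>x - s\<bar>"
    using deriv x \<open>e > 0\<close> \<open>backward_jump S x = x\<close> unfolding has_nabla_derivative_def by force
  have "f s \<le> f b + e * (b - s)" if "s \<in> S" "x - d < s" "s < x" for s
  proof -
    have "\<bar>f x - f s - f' x * (x - s)\<bar> \<le> e * (x - s)"
      using d that by auto
    moreover have "0 \<le> f' x * (x - s)"
      using nonneg x that by simp
    ultimately show ?thesis
      using Px by (simp add: abs_le_iff algebra_simps)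
  qed
  then show "\<exists>d>0. \<forall>s\<in>S. x - d < s \<longrightarrow> s < x \<longrightarrow> f s \<le> f b + e * (b - s)"
    using \<open>d > 0\<close> by blast
next
  fix x assume x: "x \<in> S" "a \<le> x" "x < b" and dense: "\<forall>z>x. \<exists>s\<in>S. x < s \<and> s < z"
    and P: "\<forall>s\<in>S. x < s \<longrightarrow> s \<le> b \<longrightarrow> f s \<le> f b + e * (b - s)"
  have "continuous (at x within S) (\<lambda>t. f t + e * t)"
    using deriv x by (intro continuous_intros has_nabla_derivative_continuous) auto
  moreover have "\<forall>s\<in>S. x < s \<longrightarrow> s \<le> b \<longrightarrow> f s + e * s \<le> f b + e * b"
    using P by (simp add: algebra_simps)
  ultimately have "f x + e * x \<le> f b + e * b"
    using le_at_right_dense_point[OF _ dense \<open>x < b\<close>] by blast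
  then show "f x \<le> f b + e * (b - x)"
    by (simp add: algebra_simps)
qed simp

lemma nabla_derivative_nonneg_imp_le:
  fixes S :: "real set"
  assumes "closed S" "a \<in> S" "b \<in> S" "a \<le> b"
    and "\<forall>x\<in>S \<inter> {a..b}. has_nabla_derivative S f (f' x) x"
    and "\<forall>x\<in>S \<inter> {a<..b}. 0 \<le> f' x"
  shows "f a \<le> f b"
proof (rule field_le_epsilon)
  fix \<eta> :: real assume "\<eta> > 0"
  have "f a \<le> f b + \<eta> / (b - a + 1) * (b - a)"
    using \<open>\<eta> > 0\<close> \<open>a \<le> b\<close> by (intro nabla_derivative_nonneg_imp_le_slack[OF assms(1-4) _ assms(5,6)]) simp
  also have "\<dots> \<le> f b + \<eta>"
    using \<open>\<eta> > 0\<close> \<open>a \<le> b\<close> by (simp add: field_simps)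
  finally show "f a \<le> f b + \<eta>" .
qed

lemma nabla_derivative_nonneg_if_mono_on:
  fixes S :: "real set"
  assumes deriv: "has_nabla_derivative S f D x" and "closed S" "a \<in> S" "x \<in> S" "a < x"
    and mono: "mono_on (S \<inter> {a..x}) f"
  shows "0 \<le> D"
proof -
  let ?r = "backward_jump S x"
  consider "?r < x" | "?r = x"
    using backward_jump_le[of S x] by linarith
  then show ?thesis
  proof cases
    case 1
    have "?r \<in> S" "a \<le> ?r"
      using assms by (auto intro: backward_jump_mem le_backward_jump)
    then have "f ?r \<le> f x"
      using mono 1 \<open>x \<in> S\<close> by (auto intro: mono_onD)
    moreover have "f x - f ?r = D * (x - ?r)"
      using deriv \<open>x \<in> S\<close> by (rule nabla_derivative_backward_difference)
    ultimately have "0 \<le> D * (x - ?r)"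
      by linarith
    then show ?thesis
      using 1 by (simp add: zero_le_mult_iff)
  next
    case 2
    have "0 \<le> D + e" if "e > 0" for e
    proof -
      obtain d where "d > 0" and d: "\<forall>s\<in>S. \<bar>x - s\<bar> < d \<longrightarrow>
          \<bar>f x - f s - D * (x - s)\<bar> \<le> e * \<bar>x - s\<bar>"
        using deriv \<open>e > 0\<close> 2 unfolding has_nabla_derivative_def by force
      obtain s where s: "s \<in> S" "max a (x - d) < s" "s < x"
        using exists_between_backward_jump[OF \<open>a \<in> S\<close> \<open>a < x\<close>, of "max a (x - d)"]
          2 \<open>a < x\<close> \<open>d > 0\<close> by auto
      then have "f s \<le> f x"
        using mono \<open>x \<in> S\<close> by (auto intro: mono_onD)
      moreover have "\<bar>f x - f s - D * (x - s)\<bar> \<le> e * (x - s)"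
        using d s by auto
      ultimately have "0 \<le> (D + e) * (x - s)"
        by (simp add: abs_le_iff algebra_simps)
      then show ?thesis
        using s by (simp add: zero_le_mult_iff)
    qed
    then show ?thesis
      using field_le_epsilon[of 0 D] by simp
  qed
qed

lemma mono_on_uminus_iff:
  fixes f :: "'a::order \<Rightarrow> 'b::ordered_ab_group_add"
  shows "mono_on A (\<lambda>x. - f x) \<longleftrightarrow> antimono_on A f"
  unfolding monotone_on_def by auto

lemma nabla_derivative_nonpos_if_antimono_on:
  fixes S :: "real set"
  assumes "has_nabla_derivative S f D x" "closed S" "a \<in> S" "x \<in> S" "a < x"
    and "antimono_on (S \<inter> {a..x}) f"
  shows "D \<le> 0"
  using nabla_derivative_nonneg_if_mono_on[OF has_nabla_derivative_minus[OF assms(1)] assms(2-5)]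
    assms(6) by (simp add: mono_on_uminus_iff)

lemma mono_on_if_nabla_derivative_nonneg:
  fixes T :: "real set"
  assumes "closed T"
    and deriv: "\<forall>x\<in>T \<inter> {\<alpha><..\<beta>}. has_nabla_derivative (T \<inter> {\<alpha>..\<beta>}) f (f' x) x"
    and nonneg: "\<And>a x. a \<in> T \<inter> {\<alpha><..\<beta>} \<Longrightarrow> x \<in> T \<inter> {a<..\<beta>} \<Longrightarrow> 0 \<le> f' x"
  shows "mono_on (T \<inter> {\<alpha><..\<beta>}) f"
proof (rule mono_onI)
  fix a b assume a: "a \<in> T \<inter> {\<alpha><..\<beta>}" and b: "b \<in> T \<inter> {\<alpha><..\<beta>}" and "a \<le> b"
  show "f a \<le> f b"
  proof (rule nabla_derivative_nonneg_imp_le[of "T \<inter> {\<alpha>..\<beta>}" a b f f'])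
    show "closed (T \<inter> {\<alpha>..\<beta>})"
      using \<open>closed T\<close> by auto
    show "\<forall>x\<in>T \<inter> {\<alpha>..\<beta>} \<inter> {a..b}. has_nabla_derivative (T \<inter> {\<alpha>..\<beta>}) f (f' x) x"
      using deriv a by auto
    show "\<forall>x\<in>T \<inter> {\<alpha>..\<beta>} \<inter> {a<..b}. 0 \<le> f' x"
      using nonneg[OF a] b by auto
  qed (use a b \<open>a \<le> b\<close> in auto)
qed

lemma antimono_on_if_nabla_derivative_nonpos:
  fixes T :: "real set"
  assumes "closed T"
    and deriv: "\<forall>x\<in>T \<inter> {\<alpha><..\<beta>}. has_nabla_derivative (T \<inter> {\<alpha>..\<beta>}) f (f' x) x"
    and nonpos: "\<And>a x. a \<in> T \<inter> {\<alpha><..\<beta>} \<Longrightarrow> x \<in> T \<inter> {a<..\<beta>} \<Longrightarrow> f' x \<le> 0"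
  shows "antimono_on (T \<inter> {\<alpha><..\<beta>}) f"
proof -
  have "mono_on (T \<inter> {\<alpha><..\<beta>}) (\<lambda>x. - f x)"
  proof (rule mono_on_if_nabla_derivative_nonneg[OF \<open>closed T\<close>])
    show "\<forall>x\<in>T \<inter> {\<alpha><..\<beta>}. has_nabla_derivative (T \<inter> {\<alpha>..\<beta>}) (\<lambda>x. - f x) (- f' x) x"
      using deriv by (auto intro: has_nabla_derivative_minus)
  qed (use nonpos in fastforce)
  then show ?thesis
    by (simp add: mono_on_uminus_iff)
qed

lemma has_nabla_derivative_ratio_combination:
  assumes "has_nabla_derivative S \<phi> (\<phi>' x) x" "has_nabla_derivative S \<psi> (\<psi>' x) x"
    and "has_nabla_derivative S R r x" "x \<in> S" "\<phi>' x = R x * \<psi>' x"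
  shows "has_nabla_derivative S (\<lambda>t. R t * \<psi> t - \<phi> t) (r * \<psi> (backward_jump S x)) x"
  using has_nabla_derivative_diff[OF has_nabla_derivative_mult[OF assms(3,2,4)] assms(1)] assms(5)
  by simp

theorem proposition2p2:
  fixes T :: "real set" and \<alpha> \<beta> :: real
    and \<phi> \<psi> \<phi>' \<psi>' r' :: "real \<Rightarrow> real"
  assumes ts: "time_scale T"
    and ab: "\<alpha> \<in> T" "\<beta> \<in> T" "\<alpha> < \<beta>"
    and dphi: "\<forall>x\<in>T \<inter> {\<alpha><..\<beta>}. has_nabla_derivative (T \<inter> {\<alpha>..\<beta>}) \<phi> (\<phi>' x) x"
    and dpsi: "\<forall>x\<in>T \<inter> {\<alpha><..\<beta>}. has_nabla_derivative (T \<inter> {\<alpha>..\<beta>}) \<psi> (\<psi>' x) x"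
    and nz: "\<forall>x\<in>T \<inter> {\<alpha><..\<beta>}. \<psi>' x \<noteq> 0"
    and dratio: "\<forall>x\<in>T \<inter> {\<alpha><..\<beta>}.
                   has_nabla_derivative (T \<inter> {\<alpha>..\<beta>}) (\<lambda>t. \<phi>' t / \<psi>' t) (r' x) x"
  shows
    "((\<forall>x\<in>T \<inter> {\<alpha><..\<beta>}. \<psi> (backward_jump T x) \<ge> 0) \<longrightarrow>
        (mono_on (T \<inter> {\<alpha><..\<beta>}) (\<lambda>t. \<phi>' t / \<psi>' t)
           \<longrightarrow> mono_on (T \<inter> {\<alpha><..\<beta>}) (\<lambda>x. \<phi>' x / \<psi>' x * \<psi> x - \<phi> x)) \<and>
        (antimono_on (T \<inter> {\<alpha><..\<beta>}) (\<lambda>t. \<phi>' t / \<psi>' t)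
           \<longrightarrow> antimono_on (T \<inter> {\<alpha><..\<beta>}) (\<lambda>x. \<phi>' x / \<psi>' x * \<psi> x - \<phi> x))) \<and>
     ((\<forall>x\<in>T \<inter> {\<alpha><..\<beta>}. \<psi> (backward_jump T x) \<le> 0) \<longrightarrow>
        (mono_on (T \<inter> {\<alpha><..\<beta>}) (\<lambda>t. \<phi>' t / \<psi>' t)
           \<longrightarrow> antimono_on (T \<inter> {\<alpha><..\<beta>}) (\<lambda>x. \<phi>' x / \<psi>' x * \<psi> x - \<phi> x)) \<and>
        (antimono_on (T \<inter> {\<alpha><..\<beta>}) (\<lambda>t. \<phi>' t / \<psi>' t)
           \<longrightarrow> mono_on (T \<inter> {\<alpha><..\<beta>}) (\<lambda>x. \<phi>' x / \<psi>' x * \<psi> x - \<phi> x)))"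
proof -
  let ?I = "T \<inter> {\<alpha><..\<beta>}" and ?S = "T \<inter> {\<alpha>..\<beta>}" and ?R = "\<lambda>t. \<phi>' t / \<psi>' t"
  have "closed T" "closed ?S"
    using ts by (auto simp: time_scale_def)
  have dY: "\<forall>x\<in>?I. has_nabla_derivative ?S (\<lambda>x. ?R x * \<psi> x - \<phi> x) (r' x * \<psi> (backward_jump T x)) x"
  proof
    fix x assume "x \<in> ?I"
    then have "backward_jump ?S x = backward_jump T x"
      using \<open>\<alpha> \<in> T\<close> by (intro backward_jump_Int_atLeastAtMost) auto
    moreover have "has_nabla_derivative ?S (\<lambda>x. ?R x * \<psi> x - \<phi> x) (r' x * \<psi> (backward_jump ?S x)) x"
      using \<open>x \<in> ?I\<close> dphi dpsi dratio nz by (intro has_nabla_derivative_ratio_combination) auto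
    ultimately show "has_nabla_derivative ?S (\<lambda>x. ?R x * \<psi> x - \<phi> x) (r' x * \<psi> (backward_jump T x)) x"
      by (simp only:)
  qed
  have r'_nonneg: "0 \<le> r' x" if "mono_on ?I ?R" "a \<in> ?I" "x \<in> T \<inter> {a<..\<beta>}" for a x
    using that dratio \<open>closed ?S\<close>
    by (intro nabla_derivative_nonneg_if_mono_on[where S = ?S and a = a]) (auto intro: mono_on_subset)
  have r'_nonpos: "r' x \<le> 0" if "antimono_on ?I ?R" "a \<in> ?I" "x \<in> T \<inter> {a<..\<beta>}" for a x
    using that dratio \<open>closed ?S\<close>
    by (intro nabla_derivative_nonpos_if_antimono_on[where S = ?S and a = a]) (auto intro: monotone_on_subset)
  show ?thesis
    using mono_on_if_nabla_derivative_nonneg[OF \<open>closed T\<close> dY]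
      antimono_on_if_nabla_derivative_nonpos[OF \<open>closed T\<close> dY]
      r'_nonneg r'_nonpos
    by (intro conjI impI)
      (simp_all add: mult_nonneg_nonneg mult_nonpos_nonneg mult_nonneg_nonpos mult_nonpos_nonpos)
qed

end
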